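(* Consider the generalized mass-action system $$\dot s=f(u,s)=\sum_{j=1}^{r}u_j(t)\,s^{v_{\cdot j}}\big(v'_{\cdot j}-v_{\cdot j}\big),\qquad s(0)=s_0\in\mathbb{R}^n_{\ge 0},$$ where $u:[0,\infty)\to\mathbb{U}$ with $\mathbb{U}\subset\mathbb{R}^r_{>0}$. Suppose that $\lim_{t\to\infty}u(t)=\bar u\in\mathbb{R}^r_{>0}$, that $s(t)$ is a bounded solution defined for all $t\ge 0$, and that $\bar s\in\mathbb{R}^n_{>0}$ is the unique equilibrium of the (constant-rate) mass-action system $\dot s=f(\bar u,s)$ in $(s_0+\mathscr{S})\cap\mathbb{R}^n_{>0}$. If $V$ is an ISS-Lyapunov function with respect to $(\bar u,\bar s)$ for this system, then either $s(t)\to\bar s$ as $t\to\infty$, or $s(t)\to\partial\mathbb{R}^n_{\ge 0}$ as $t\to\infty$ (i.e. $\operatorname{dist}(s(t),\partial\mathbb{R}^n_{\ge0})\to 0$).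
   Context: A chemical reaction network (CRN) has species $S_1,\dots,S_n$ and reactions $v_{\cdot j}\to v'_{\cdot j}$, $j=1,\dots,r$, with $v_{\cdot j},v'_{\cdot j}\in\mathbb{Z}^n_{\ge0}$, $v_{\cdot j}\neq v'_{\cdot j}$. Notation: $s^{v}=\prod_{i=1}^n s_i^{v_i}$ with $0^0=1$. The stoichiometric subspace is $\mathscr{S}=\mathrm{span}\{v'_{\cdot j}-v_{\cdot j}: j=1,\dots,r\}$. A class $\mathcal{K}_\infty$ function is a continuous strictly increasing $\gamma:\mathbb{R}_{\ge0}\to\mathbb{R}_{\ge0}$ with $\gamma(0)=0$ and $\gamma(s)\to\infty$ as $s\to\infty$. ISS-Lyapunov function: for the system above, an ISS-Lyapunov function with respect to $(\bar u,\bar s)\in\mathbb{R}^r_{>0}\times\mathbb{R}^n_{>0}$ is a continuous $V:\mathbb{R}^n_{\ge0}\to\mathbb{R}_{\ge0}$ such that (i) the restriction of $V$ to $\mathbb{R}^n_{>0}$ is continuously differentiable; (ii) $V(s)\to+\infty$ as $|s|\to+\infty$; (iii) $V(\bar s)=0$ and $V(s)>0$ for $s\in\mathbb{R}^n_{\ge0}\setminus\{\bar s\}$; (iv) for each compact $F\subset\mathbb{R}^n_{\ge0}$ there exist class $\mathcal{K}_\infty$ functions $\alpha,\rho$ such that $\nabla V(s)^\top f(u,s)\le-\alpha(|s-\bar s|)+\rho(|u-\bar u|)$ for all $u\in\mathbb{U}$ and all $s\in F\cap(s_0+\mathscr{S})\cap\mathbb{R}^n_{>0}$. *)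

theory Defs
  imports "HOL-Analysis.Analysis"
begin

text \<open>Species are indexed by a finite type 'n, reactions by a finite type 'r.
  Reactant / product complexes: vectors of natural numbers.\<close>

definition nonneg_orthant :: "(real ^ 'n) set" where
  "nonneg_orthant = {x. \<forall>i. 0 \<le> x $ i}"

definition pos_orthant :: "(real ^ 'n) set" where
  "pos_orthant = {x. \<forall>i. 0 < x $ i}"

text \<open>Monomial s^v (with 0^0 = 1, as for Isabelle's power).\<close>
definition monom :: "real ^ 'n \<Rightarrow> nat ^ 'n \<Rightarrow> real" where
  "monom s v = (\<Prod>i\<in>UNIV. (s $ i) ^ (v $ i))"

definition reaction_vec :: "nat ^ 'n \<Rightarrow> nat ^ 'n \<Rightarrow> real ^ 'n" where
  "reaction_vec a b = (\<chi> i. real (b $ i) - real (a $ i))"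

definition gma_field ::
  "('r::finite \<Rightarrow> nat ^ 'n) \<Rightarrow> ('r \<Rightarrow> nat ^ 'n) \<Rightarrow> real ^ 'r \<Rightarrow> real ^ 'n \<Rightarrow> real ^ 'n" where
  "gma_field v v' u s = (\<Sum>j\<in>UNIV. (u $ j * monom s (v j)) *\<^sub>R reaction_vec (v j) (v' j))"

definition stoich_subspace :: "('r::finite \<Rightarrow> nat ^ 'n) \<Rightarrow> ('r \<Rightarrow> nat ^ 'n) \<Rightarrow> (real ^ 'n) set" where
  "stoich_subspace v v' = span {reaction_vec (v j) (v' j) | j. True}"

definition class_K_inf :: "(real \<Rightarrow> real) \<Rightarrow> bool" where
  "class_K_inf g \<longleftrightarrow> continuous_on {0..} g \<and> strict_mono_on {0..} g \<and> g 0 = 0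
     \<and> filterlim g at_top at_top"

definition ISS_Lyapunov ::
  "('r::finite \<Rightarrow> nat ^ 'n) \<Rightarrow> ('r \<Rightarrow> nat ^ 'n) \<Rightarrow> (real ^ 'r) set \<Rightarrow> real ^ 'n
   \<Rightarrow> (real ^ 'n \<Rightarrow> real) \<Rightarrow> real ^ 'r \<Rightarrow> real ^ 'n \<Rightarrow> bool" where
  "ISS_Lyapunov v v' U s0 V ubar sbar \<longleftrightarrow>
     continuous_on nonneg_orthant V \<and> (\<forall>s\<in>nonneg_orthant. 0 \<le> V s) \<and>
     (\<exists>DV. (\<forall>s\<in>pos_orthant. (V has_derivative (\<lambda>h. DV s \<bullet> h)) (at s))
        \<and> continuous_on pos_orthant DV
        \<and> (\<forall>F. compact F \<and> F \<subseteq> nonneg_orthant \<longrightarrow>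
              (\<exists>\<alpha> \<rho>. class_K_inf \<alpha> \<and> class_K_inf \<rho> \<and>
                 (\<forall>u\<in>U. \<forall>s\<in>F \<inter> {s0 + x | x. x \<in> stoich_subspace v v'} \<inter> pos_orthant.
                    DV s \<bullet> gma_field v v' u s \<le> - \<alpha> (norm (s - sbar)) + \<rho> (norm (u - ubar)))))) \<and>
     (\<forall>M. \<exists>R. \<forall>s\<in>nonneg_orthant. norm s \<ge> R \<longrightarrow> V s \<ge> M) \<and>
     V sbar = 0 \<and> (\<forall>s\<in>nonneg_orthant - {sbar}. V s > 0)"

end

theory Submission
  imports Defs
begin

text \<open>The reaction vectors span the stoichiometric subspace, so the solution stays in its class
  s0 + S. On bounded states and rates a species is consumed at rate at most c s_i, so by Gronwall
  a present species stays present. Hence for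
  large times the solution either lies on the boundary of the orthant throughout (distance zero), or
  in its interior throughout. In the latter case the ISS estimate applies on the compact closure of
  the orbit, and with the input error vanishing it drives V(s(t)) below every positive level, which
  by positive definiteness forces s(t) to sbar.\<close>

lemma pos_orthant_subset_nonneg_orthant: "pos_orthant \<subseteq> nonneg_orthant"
  by (auto simp: pos_orthant_def nonneg_orthant_def less_imp_le)

lemma closed_nonneg_orthant: "closed nonneg_orthant"
  unfolding nonneg_orthant_def
  by (intro closed_Collect_all closed_Collect_le continuous_intros)

lemma nonneg_orthant_diff_pos_orthant_subset_frontier:
  "nonneg_orthant - pos_orthant \<subseteq> frontier nonneg_orthant"
proof
  fix x :: "real ^ 'n" assume x: "x \<in> nonneg_orthant - pos_orthant"
  then obtain i where "\<not> 0 < x $ i" by (auto simp: pos_orthant_def)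
  moreover have "0 \<le> x $ i" using x by (simp add: nonneg_orthant_def)
  ultimately have xi: "x $ i = 0" by linarith
  have "x \<notin> interior nonneg_orthant"
  proof
    assume "x \<in> interior nonneg_orthant"
    then obtain e where e: "e > 0" "ball x e \<subseteq> nonneg_orthant" by (auto simp: mem_interior)
    have "x - (e/2) *\<^sub>R axis i 1 \<in> ball x e" using e by (simp add: dist_norm)
    then have "0 \<le> (x - (e/2) *\<^sub>R axis i 1) $ i"
      using e(2) unfolding nonneg_orthant_def by blast
    then show False using xi e by (simp add: axis_def)
  qed
  then show "x \<in> frontier nonneg_orthant"
    using x closure_subset by (auto simp: frontier_def)
qed

lemma has_vector_derivative_component:
  fixes x :: "real \<Rightarrow> real ^ 'n"
  assumes "(x has_vector_derivative x') (at t)"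
  shows "((\<lambda>t. x t $ i) has_real_derivative x' $ i) (at t)"
  using bounded_linear.has_vector_derivative[OF bounded_linear_vec_nth assms, of i]
  by (simp add: has_real_derivative_iff_has_vector_derivative)

lemma has_vector_derivative_gradient_chain:
  assumes "(x has_vector_derivative x') (at t)" "(V has_derivative (\<lambda>h. g \<bullet> h)) (at (x t))"
  shows "((\<lambda>t. V (x t)) has_real_derivative g \<bullet> x') (at t)"
proof -
  have "((\<lambda>t. V (x t)) has_derivative (\<lambda>h. g \<bullet> (h *\<^sub>R x'))) (at t)"
    using has_derivative_compose assms unfolding has_vector_derivative_def by blast
  moreover have "(\<lambda>h. g \<bullet> (h *\<^sub>R x')) = (*) (g \<bullet> x')" by (simp add: fun_eq_iff mult.commute)
  ultimately show ?thesis by (simp add: has_field_derivative_def)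
qed

lemma has_vector_derivative_in_span_imp_diff_in_span:
  fixes x :: "real \<Rightarrow> 'a::euclidean_space"
  assumes "convex I"
    and deriv: "\<And>t. t \<in> I \<Longrightarrow> (x has_vector_derivative x' t) (at t within I)"
    and x'_span: "\<And>t. t \<in> I \<Longrightarrow> x' t \<in> span B"
    and "a \<in> I" "b \<in> I"
  shows "x b - x a \<in> span B"
proof -
  obtain y z where y: "y \<in> span B" and z: "\<And>w. w \<in> span B \<Longrightarrow> orthogonal z w"
    and yz: "x b - x a = y + z"
    using orthogonal_subspace_decomp_exists[of B "x b - x a"] by blast
  have "\<exists>c. \<forall>t\<in>I. z \<bullet> x t = c"
  proof (rule has_derivative_zero_constant[OF \<open>convex I\<close>])
    fix t assume "t \<in> I"
    then have "((\<lambda>t. z \<bullet> x t) has_derivative (\<lambda>h. z \<bullet> (h *\<^sub>R x' t))) (at t within I)"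
      using deriv by (auto intro!: derivative_eq_intros simp: has_vector_derivative_def)
    moreover have "z \<bullet> x' t = 0"
      using z[OF x'_span[OF \<open>t \<in> I\<close>]] by (simp add: orthogonal_def)
    ultimately show "((\<lambda>t. z \<bullet> x t) has_derivative (\<lambda>h. 0)) (at t within I)"
      by simp
  qed
  then have "z \<bullet> (y + z) = 0"
    using yz \<open>a \<in> I\<close> \<open>b \<in> I\<close> by (metis inner_diff_right right_minus_eq)
  moreover have "z \<bullet> y = 0" using z[OF y] by (simp add: orthogonal_def)
  ultimately have "z = 0" by (simp add: inner_add_right)
  then show ?thesis using yz y by simp
qed

lemma tendsto_imp_Bfun:
  fixes f :: "'a \<Rightarrow> 'b::real_normed_vector"
  assumes "(f \<longlongrightarrow> l) F"
  shows "Bfun f F"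
  using order_tendstoD(2)[OF tendsto_norm[OF assms], of "norm l + 1"]
  by (intro BfunI[of _ "norm l + 1"]) (auto elim: eventually_mono)

lemma bounded_image_atLeast_imp_Bfun:
  fixes f :: "real \<Rightarrow> 'b::real_normed_vector"
  assumes "bounded (f ` {a..})"
  shows "Bfun f at_top"
proof -
  obtain B where "\<forall>x\<in>f ` {a..}. norm x \<le> B" using assms bounded_iff by blast
  then show ?thesis by (intro BfunI[of _ B] eventually_at_top_linorderI[of a]) auto
qed

lemma eventually_has_vector_derivative_at:
  assumes "\<forall>t\<ge>a. (x has_vector_derivative x' t) (at t within {a..})"
  shows "\<forall>\<^sub>F t in at_top. (x has_vector_derivative x' t) (at t)"
proof (rule eventually_at_top_linorderI)
  fix t assume "a + 1 \<le> t"
  then have "(x has_vector_derivative x' t) (at t within {a..})" using assms by simp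
  moreover have "at t within {a..} = at t" using \<open>a + 1 \<le> t\<close> by (intro at_within_interior) auto
  ultimately show "(x has_vector_derivative x' t) (at t)" by simp
qed

lemma gronwall_exp_lower_bound:
  fixes y y' :: "real \<Rightarrow> real"
  assumes "a \<le> t"
    and deriv: "\<And>\<tau>. a \<le> \<tau> \<Longrightarrow> \<tau> \<le> t \<Longrightarrow> (y has_real_derivative y' \<tau>) (at \<tau>)"
    and ge: "\<And>\<tau>. a \<le> \<tau> \<Longrightarrow> \<tau> \<le> t \<Longrightarrow> - c * y \<tau> \<le> y' \<tau>"
  shows "exp (- c * (t - a)) * y a \<le> y t"
proof -
  have "exp (c * a) * y a \<le> exp (c * t) * y t"
  proof (rule DERIV_nonneg_imp_nondecreasing[OF \<open>a \<le> t\<close>])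
    fix \<tau> assume \<tau>: "a \<le> \<tau>" "\<tau> \<le> t"
    have "((\<lambda>\<tau>. exp (c * \<tau>) * y \<tau>) has_real_derivative exp (c * \<tau>) * (c * y \<tau> + y' \<tau>)) (at \<tau>)"
      using deriv[OF \<tau>] by (auto intro!: derivative_eq_intros simp: algebra_simps)
    moreover have "0 \<le> exp (c * \<tau>) * (c * y \<tau> + y' \<tau>)" using ge[OF \<tau>] by simp
    ultimately show "\<exists>d. ((\<lambda>\<tau>. exp (c * \<tau>) * y \<tau>) has_real_derivative d) (at \<tau>) \<and> 0 \<le> d"
      by blast
  qed
  then have "exp (- c * t) * (exp (c * a) * y a) \<le> exp (- c * t) * (exp (c * t) * y t)"
    by (simp add: mult_left_mono)
  then show ?thesis by (simp add: algebra_simps flip: exp_add)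
qed

lemma exists_below_level:
  fixes W W' :: "real \<Rightarrow> real"
  assumes deriv: "\<And>t. T \<le> t \<Longrightarrow> (W has_real_derivative W' t) (at t)"
    and nonneg: "\<And>t. T \<le> t \<Longrightarrow> 0 \<le> W t" and "0 < \<beta>"
    and decr: "\<And>t. T \<le> t \<Longrightarrow> \<eta> \<le> W t \<Longrightarrow> W' t \<le> - \<beta>"
  shows "\<exists>t\<ge>T. W t < \<eta>"
proof (rule ccontr)
  assume "\<not> ?thesis"
  then have above: "\<And>t. T \<le> t \<Longrightarrow> \<eta> \<le> W t" by (auto simp: not_less)
  define t where "t = T + (W T + 1) / \<beta>"
  have "T \<le> t" using nonneg[of T] \<open>0 < \<beta>\<close> by (simp add: t_def)
  have "W t + \<beta> * t \<le> W T + \<beta> * T"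
  proof (rule DERIV_nonpos_imp_nonincreasing[OF \<open>T \<le> t\<close>])
    fix \<tau> assume "T \<le> \<tau>" "\<tau> \<le> t"
    have "((\<lambda>\<tau>. W \<tau> + \<beta> * \<tau>) has_real_derivative W' \<tau> + \<beta>) (at \<tau>)"
      using deriv[OF \<open>T \<le> \<tau>\<close>] by (auto intro!: derivative_eq_intros)
    moreover have "W' \<tau> + \<beta> \<le> 0" using decr[OF \<open>T \<le> \<tau>\<close> above[OF \<open>T \<le> \<tau>\<close>]] by simp
    ultimately show "\<exists>d. ((\<lambda>\<tau>. W \<tau> + \<beta> * \<tau>) has_real_derivative d) (at \<tau>) \<and> d \<le> 0"
      by blast
  qed
  moreover have "\<beta> * t - \<beta> * T = W T + 1" using \<open>0 < \<beta>\<close> by (simp add: t_def field_simps)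
  ultimately have "W t \<le> -1" by linarith
  with nonneg[OF \<open>T \<le> t\<close>] show False by linarith
qed

text \<open>At the first time in [a, t] where the level is reached W would be decreasing,
  so it must have been above the level just before.\<close>
lemma stays_below_level:
  fixes W W' :: "real \<Rightarrow> real"
  assumes deriv: "\<And>t. a \<le> t \<Longrightarrow> (W has_real_derivative W' t) (at t)"
    and decr: "\<And>t. a \<le> t \<Longrightarrow> \<eta> \<le> W t \<Longrightarrow> W' t < 0"
    and "W a < \<eta>" "a \<le> t"
  shows "W t < \<eta>"
proof (rule ccontr)
  assume "\<not> W t < \<eta>"
  define A where "A = {\<tau> \<in> {a..t}. \<eta> \<le> W \<tau>}"
  have "continuous_on {a..t} W"
    using deriv by (intro DERIV_continuous_on[where D=W']) (rule has_field_derivative_at_within, simp)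
  then have "closed A"
    unfolding A_def by (rule continuous_on_closed_Collect_le[OF continuous_on_const _ closed_atLeastAtMost])
  moreover have "t \<in> A" using \<open>\<not> W t < \<eta>\<close> \<open>a \<le> t\<close> by (simp add: A_def)
  moreover have "bdd_below A" unfolding A_def by (rule bdd_belowI[of _ a]) simp
  ultimately have "Inf A \<in> A" using closed_contains_Inf by blast
  then have Inf_A: "a \<le> Inf A" "Inf A \<le> t" "\<eta> \<le> W (Inf A)" by (simp_all add: A_def)
  then have "a < Inf A" using \<open>W a < \<eta>\<close> by (metis order.not_eq_order_implies_strict not_le)
  obtain d where d: "0 < d" "\<And>h. 0 < h \<Longrightarrow> h < d \<Longrightarrow> W (Inf A) < W (Inf A - h)"
    using DERIV_neg_dec_left[OF deriv[OF Inf_A(1)] decr[OF Inf_A(1,3)]] by blast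
  define h where "h = min (d / 2) (Inf A - a)"
  have "0 < h" "h < d" using d(1) \<open>a < Inf A\<close> by (auto simp: h_def)
  moreover have "a \<le> Inf A - h" "Inf A - h \<le> t" using \<open>0 < h\<close> Inf_A(2) by (auto simp: h_def)
  ultimately have "Inf A - h \<in> A" using Inf_A(3) d(2)[of h] by (simp add: A_def)
  then have "Inf A \<le> Inf A - h" using \<open>bdd_below A\<close> by (rule cInf_lower)
  then show False using \<open>0 < h\<close> by simp
qed

lemma eventually_below_level:
  fixes W W' :: "real \<Rightarrow> real"
  assumes deriv: "\<And>t. T \<le> t \<Longrightarrow> (W has_real_derivative W' t) (at t)"
    and nonneg: "\<And>t. T \<le> t \<Longrightarrow> 0 \<le> W t" and "0 < \<beta>"
    and decr: "\<And>t. T \<le> t \<Longrightarrow> \<eta> \<le> W t \<Longrightarrow> W' t \<le> - \<beta>"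
  shows "\<forall>\<^sub>F t in at_top. W t < \<eta>"
proof -
  obtain t0 where "T \<le> t0" "W t0 < \<eta>" using exists_below_level[OF assms] by blast
  have "W t < \<eta>" if "t0 \<le> t" for t
  proof (rule stays_below_level[where W=W and W'=W' and a=t0])
    show "(W has_real_derivative W' \<tau>) (at \<tau>)" if "t0 \<le> \<tau>" for \<tau>
      using deriv that \<open>T \<le> t0\<close> by (meson order.trans)
    show "W' \<tau> < 0" if "t0 \<le> \<tau>" "\<eta> \<le> W \<tau>" for \<tau>
      using decr[of \<tau>] that \<open>T \<le> t0\<close> \<open>0 < \<beta>\<close> by linarith
  qed (use \<open>W t0 < \<eta>\<close> that in auto)
  then show ?thesis by (auto simp: eventually_at_top_linorder)
qed

lemma compact_small_value_imp_near:
  fixes V :: "'a::metric_space \<Rightarrow> real"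
  assumes "compact K" "continuous_on K V" "\<And>y. y \<in> K \<Longrightarrow> y \<noteq> c \<Longrightarrow> 0 < V y" "0 < \<epsilon>"
  obtains \<eta> where "0 < \<eta>" "\<And>y. y \<in> K \<Longrightarrow> V y < \<eta> \<Longrightarrow> dist y c < \<epsilon>"
proof (cases "{y \<in> K. \<epsilon> \<le> dist y c} = {}")
  case True
  then show ?thesis using that[of 1] by force
next
  case False
  have "{y \<in> K. \<epsilon> \<le> dist y c} = K \<inter> {y. \<epsilon> \<le> dist y c}" by auto
  then have "compact {y \<in> K. \<epsilon> \<le> dist y c}"
    using \<open>compact K\<close> by (simp add: compact_Int_closed closed_Collect_le continuous_on_dist)
  moreover have "continuous_on {y \<in> K. \<epsilon> \<le> dist y c} V"
    using \<open>continuous_on K V\<close> by (rule continuous_on_subset) auto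
  ultimately obtain y0 where y0: "y0 \<in> {y \<in> K. \<epsilon> \<le> dist y c}"
    and min: "\<forall>y \<in> {y \<in> K. \<epsilon> \<le> dist y c}. V y0 \<le> V y"
    using continuous_attains_inf[OF _ False] by blast
  show ?thesis
  proof (rule that)
    have "y0 \<noteq> c" using y0 \<open>0 < \<epsilon>\<close> by auto
    then show "0 < V y0" using y0 assms(3) by auto
    show "dist y c < \<epsilon>" if "y \<in> K" "V y < V y0" for y
      using min that by force
  qed
qed

lemma lyapunov_vanishing_perturbation_tendsto:
  fixes x :: "real \<Rightarrow> 'a::metric_space" and V :: "'a \<Rightarrow> real"
  assumes "compact K" "K \<subseteq> N" "c \<in> N"
    and V_cont: "continuous_on N V" and "V c = 0" and V_pos: "\<And>y. y \<in> K \<Longrightarrow> y \<noteq> c \<Longrightarrow> 0 < V y"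
    and \<alpha>: "strict_mono_on {0..} \<alpha>" "\<alpha> 0 = 0" and r: "(r \<longlongrightarrow> 0) at_top"
    and ev: "\<forall>\<^sub>F t in at_top. x t \<in> K \<and> ((\<lambda>t. V (x t)) has_real_derivative D t) (at t) \<and>
               D t \<le> - \<alpha> (dist (x t) c) + r t"
  shows "(x \<longlongrightarrow> c) at_top"
proof (rule tendstoI)
  fix \<epsilon> :: real assume "0 < \<epsilon>"
  obtain \<eta> where "0 < \<eta>" and \<eta>: "\<And>y. y \<in> K \<Longrightarrow> V y < \<eta> \<Longrightarrow> dist y c < \<epsilon>"
    using compact_small_value_imp_near[OF \<open>compact K\<close> continuous_on_subset[OF V_cont \<open>K \<subseteq> N\<close>]
        V_pos \<open>0 < \<epsilon>\<close>] by blast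
  obtain d where "0 < d" and d: "\<And>y. y \<in> N \<Longrightarrow> dist y c < d \<Longrightarrow> V y < \<eta>"
    using V_cont \<open>c \<in> N\<close> \<open>0 < \<eta>\<close> \<open>V c = 0\<close> unfolding continuous_on_iff
    by (metis dist_real_def diff_zero abs_less_iff)
  text \<open>While V(x t) is at least \<eta>, x t is d-far from c, so V decreases at rate at least \<beta>
    as soon as r is below \<beta>.\<close>
  define \<beta> where "\<beta> = \<alpha> d / 2"
  have "0 < \<beta>" using strict_mono_onD[OF \<alpha>(1), of 0 d] \<open>0 < d\<close> \<alpha>(2) by (simp add: \<beta>_def)
  have "\<forall>\<^sub>F t in at_top. r t < \<beta>" using r \<open>0 < \<beta>\<close> by (rule order_tendstoD)
  with ev have "\<forall>\<^sub>F t in at_top. x t \<in> K \<and> ((\<lambda>t. V (x t)) has_real_derivative D t) (at t) \<and>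
      D t \<le> - \<alpha> (dist (x t) c) + r t \<and> r t < \<beta>"
    by eventually_elim blast
  then obtain T where T: "\<And>t. T \<le> t \<Longrightarrow> x t \<in> K \<and> ((\<lambda>t. V (x t)) has_real_derivative D t) (at t) \<and>
      D t \<le> - \<alpha> (dist (x t) c) + r t \<and> r t < \<beta>"
    by (auto simp: eventually_at_top_linorder)
  have "\<forall>\<^sub>F t in at_top. V (x t) < \<eta>"
  proof (rule eventually_below_level[where W="\<lambda>t. V (x t)" and W'=D and T=T])
    show "((\<lambda>t. V (x t)) has_real_derivative D t) (at t)" if "T \<le> t" for t
      using T[OF that] by blast
    show "0 \<le> V (x t)" if "T \<le> t" for t
      using T[OF that] V_pos[of "x t"] \<open>V c = 0\<close> by (cases "x t = c") auto
    show "D t \<le> - \<beta>" if "T \<le> t" "\<eta> \<le> V (x t)" for t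
    proof -
      have "d \<le> dist (x t) c" using d[of "x t"] T[OF that(1)] that(2) \<open>K \<subseteq> N\<close> by force
      then have "\<alpha> d \<le> \<alpha> (dist (x t) c)" using \<open>0 < d\<close> by (intro strict_mono_on_leD[OF \<alpha>(1)]) auto
      then show ?thesis using T[OF that(1)] by (simp add: \<beta>_def)
    qed
  qed (rule \<open>0 < \<beta>\<close>)
  with ev show "\<forall>\<^sub>F t in at_top. dist (x t) c < \<epsilon>" by eventually_elim (blast intro: \<eta>)
qed

lemma class_K_inf_tendsto_zero:
  assumes "class_K_inf \<rho>" "(u \<longlongrightarrow> ubar) F"
  shows "((\<lambda>t. \<rho> (norm (u t - ubar))) \<longlongrightarrow> 0) F"
proof -
  have "((\<lambda>t. norm (u t - ubar)) \<longlongrightarrow> 0) F"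
    using assms(2) by (intro tendsto_norm_zero) (simp add: LIM_zero)
  moreover have "continuous_on {0..} \<rho>" "\<rho> 0 = 0" using assms(1) by (simp_all add: class_K_inf_def)
  ultimately show ?thesis using continuous_on_tendsto_compose[of "{0..}" \<rho>] by fastforce
qed

lemma gma_field_in_stoich_subspace: "gma_field v v' u x \<in> stoich_subspace v v'"
  unfolding gma_field_def stoich_subspace_def
  by (intro span_sum span_mul span_base) auto

lemma gma_solution_in_stoich_class:
  assumes "\<And>t. t \<in> {a..} \<Longrightarrow> (s has_vector_derivative gma_field v v' (u t) (s t)) (at t within {a..})"
    and "a \<le> t"
  shows "s t - s a \<in> stoich_subspace v v'"
  using has_vector_derivative_in_span_imp_diff_in_span[OF convex_real_interval(1) assms(1)
      gma_field_in_stoich_subspace[unfolded stoich_subspace_def]] assms(2)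
  by (simp add: stoich_subspace_def)

lemma gma_field_component:
  "gma_field v v' u x $ i = (\<Sum>j\<in>UNIV. u $ j * monom x (v j) * (real (v' j $ i) - real (v j $ i)))"
  by (simp add: gma_field_def reaction_vec_def sum_component)

lemma monom_nonneg: "x \<in> nonneg_orthant \<Longrightarrow> 0 \<le> monom x w"
  unfolding monom_def nonneg_orthant_def by (intro prod_nonneg) auto

lemma monom_le_component_mult:
  assumes x: "x \<in> nonneg_orthant" "\<And>k. x $ k \<le> M" and "1 \<le> M" "1 \<le> w $ i"
  shows "monom x w \<le> x $ i * (\<Prod>k\<in>UNIV. M ^ (w $ k))"
proof -
  have "monom x w \<le> (\<Prod>k\<in>UNIV. (if k = i then x $ i else 1) * M ^ (w $ k))"
    unfolding monom_def
  proof (rule prod_mono, safe)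
    fix k
    have xk: "0 \<le> x $ k" "x $ k \<le> M" using x by (auto simp: nonneg_orthant_def)
    then show "0 \<le> x $ k ^ w $ k" by simp
    show "x $ k ^ w $ k \<le> (if k = i then x $ i else 1) * M ^ w $ k"
    proof (cases "k = i")
      case True
      obtain m where m: "w $ i = Suc m" using \<open>1 \<le> w $ i\<close> by (cases "w $ i") auto
      have "x $ i ^ m \<le> M ^ Suc m"
        using xk True \<open>1 \<le> M\<close> by (metis power_mono power_increasing le_SucI order.trans order_refl)
      then show ?thesis using True m xk by (simp add: mult_left_mono)
    qed (use xk in \<open>simp add: power_mono\<close>)
  qed
  also have "\<dots> = x $ i * (\<Prod>k\<in>UNIV. M ^ (w $ k))"
    by (simp add: prod.distrib)
  finally show ?thesis .
qed

text \<open>Species i is consumed only by reactions having i as a reactant, so on bounded states and rates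
  its net production is bounded below by a linear degradation term.\<close>
lemma gma_field_component_ge:
  fixes v v' :: "'r::finite \<Rightarrow> nat ^ 'n"
  obtains c where "\<And>x u. x \<in> nonneg_orthant \<Longrightarrow> (\<And>k. x $ k \<le> M) \<Longrightarrow>
    (\<And>j. 0 \<le> u $ j \<and> u $ j \<le> Ub) \<Longrightarrow> - c * x $ i \<le> gma_field v v' u x $ i"
proof
  define P where "P j = (\<Prod>k\<in>UNIV. max 1 M ^ (v j $ k))" for j
  fix x :: "real ^ 'n" and u :: "real ^ 'r"
  assume x: "x \<in> nonneg_orthant" "\<And>k. x $ k \<le> M" and u: "\<And>j. 0 \<le> u $ j \<and> u $ j \<le> Ub"
  have "- (Ub * P j * real (v j $ i) * x $ i)
      \<le> u $ j * monom x (v j) * (real (v' j $ i) - real (v j $ i))" for j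
  proof -
    have m: "0 \<le> monom x (v j)" using x(1) by (rule monom_nonneg)
    have "u $ j * monom x (v j) * real (v j $ i) \<le> Ub * P j * real (v j $ i) * x $ i"
    proof (cases "v j $ i = 0")
      case False
      have "monom x (v j) \<le> x $ i * P j" unfolding P_def
        using False x by (intro monom_le_component_mult) (auto intro: le_max_iff_disj[THEN iffD2])
      then have "u $ j * monom x (v j) \<le> Ub * (x $ i * P j)"
        using u[of j] m by (intro mult_mono) auto
      from mult_right_mono[OF this, of "real (v j $ i)"] show ?thesis by (simp add: mult_ac)
    qed simp
    moreover have "0 \<le> u $ j * monom x (v j) * real (v' j $ i)" using u[of j] m by simp
    ultimately show ?thesis by (simp add: algebra_simps)
  qed
  then have "(\<Sum>j\<in>UNIV. - (Ub * P j * real (v j $ i) * x $ i)) \<le> gma_field v v' u x $ i"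
    unfolding gma_field_component by (rule sum_mono)
  then show "- (\<Sum>j\<in>UNIV. Ub * P j * real (v j $ i)) * x $ i \<le> gma_field v v' u x $ i"
    by (simp add: sum_distrib_right sum_negf)
qed

lemma gma_solution_component_pos_persists:
  fixes s :: "real \<Rightarrow> real ^ 'n" and u :: "real \<Rightarrow> real ^ 'r::finite"
  assumes deriv: "\<And>t. T \<le> t \<Longrightarrow> (s has_vector_derivative gma_field v v' (u t) (s t)) (at t)"
    and s_bound: "\<And>t. T \<le> t \<Longrightarrow> s t \<in> nonneg_orthant \<and> (\<forall>k. s t $ k \<le> M)"
    and u_bound: "\<And>t. T \<le> t \<Longrightarrow> \<forall>j. 0 \<le> u t $ j \<and> u t $ j \<le> Ub"
    and "T \<le> a" "a \<le> t" "0 < s a $ i"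
  shows "0 < s t $ i"
proof -
  obtain c where c: "\<And>x w. x \<in> nonneg_orthant \<Longrightarrow> (\<And>k. x $ k \<le> M) \<Longrightarrow>
      (\<And>j. 0 \<le> w $ j \<and> w $ j \<le> Ub) \<Longrightarrow> - c * x $ i \<le> gma_field v v' w x $ i"
    using gma_field_component_ge[where M=M and Ub=Ub and i=i and v=v and v'=v'] by blast
  have "exp (- c * (t - a)) * s a $ i \<le> s t $ i"
  proof (rule gronwall_exp_lower_bound[OF \<open>a \<le> t\<close>])
    fix \<tau> assume "a \<le> \<tau>" "\<tau> \<le> t"
    then have "T \<le> \<tau>" using \<open>T \<le> a\<close> by linarith
    show "((\<lambda>t. s t $ i) has_real_derivative gma_field v v' (u \<tau>) (s \<tau>) $ i) (at \<tau>)"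
      using deriv[OF \<open>T \<le> \<tau>\<close>] by (rule has_vector_derivative_component)
    show "- c * s \<tau> $ i \<le> gma_field v v' (u \<tau>) (s \<tau>) $ i"
      using s_bound[OF \<open>T \<le> \<tau>\<close>] u_bound[OF \<open>T \<le> \<tau>\<close>] by (blast intro: c)
  qed
  then show ?thesis using \<open>0 < s a $ i\<close> by (meson exp_gt_zero less_le_trans mult_pos_pos)
qed

lemma gma_solution_eventually_boundary_or_positive:
  fixes s :: "real \<Rightarrow> real ^ 'n" and u :: "real \<Rightarrow> real ^ 'r::finite"
  assumes "\<forall>\<^sub>F t in at_top. (s has_vector_derivative gma_field v v' (u t) (s t)) (at t)"
    and "\<forall>\<^sub>F t in at_top. s t \<in> nonneg_orthant" "Bfun s at_top"
    and "\<forall>\<^sub>F t in at_top. u t \<in> nonneg_orthant" "Bfun u at_top"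
  shows "(\<forall>\<^sub>F t in at_top. s t \<notin> pos_orthant) \<or> (\<forall>\<^sub>F t in at_top. s t \<in> pos_orthant)"
proof -
  obtain M Ub where M: "\<forall>\<^sub>F t in at_top. norm (s t) \<le> M"
    and Ub: "\<forall>\<^sub>F t in at_top. norm (u t) \<le> Ub"
    using \<open>Bfun s at_top\<close> \<open>Bfun u at_top\<close> by (metis BfunE)
  have "\<forall>\<^sub>F t in at_top.
      (s has_vector_derivative gma_field v v' (u t) (s t)) (at t) \<and> s t \<in> nonneg_orthant \<and>
      norm (s t) \<le> M \<and> u t \<in> nonneg_orthant \<and> norm (u t) \<le> Ub"
    using assms(1,2,4) M Ub by eventually_elim blast
  then obtain T where T: "\<And>t. T \<le> t \<Longrightarrow>
      (s has_vector_derivative gma_field v v' (u t) (s t)) (at t) \<and> s t \<in> nonneg_orthant \<and>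
      norm (s t) \<le> M \<and> u t \<in> nonneg_orthant \<and> norm (u t) \<le> Ub"
    by (auto simp: eventually_at_top_linorder)
  have persist: "0 < s t $ i" if "T \<le> a" "a \<le> t" "0 < s a $ i" for a t i
  proof (rule gma_solution_component_pos_persists[where s=s and u=u and T=T and M=M and Ub=Ub])
    show "s \<tau> \<in> nonneg_orthant \<and> (\<forall>k. s \<tau> $ k \<le> M)"
      and "\<forall>j. 0 \<le> u \<tau> $ j \<and> u \<tau> $ j \<le> Ub" if "T \<le> \<tau>" for \<tau>
      using T[OF that] component_le_norm_cart[of "s \<tau>"] component_le_norm_cart[of "u \<tau>"]
      by (auto simp: nonneg_orthant_def intro: order.trans)
  qed (use T that in blast)+
  show ?thesis
  proof (cases "\<exists>a\<ge>T. s a \<in> pos_orthant")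
    case True
    then obtain a where "T \<le> a" "s a \<in> pos_orthant" by blast
    then have "\<forall>t\<ge>a. s t \<in> pos_orthant" using persist by (auto simp: pos_orthant_def)
    then show ?thesis unfolding eventually_at_top_linorder by blast
  next
    case False
    then show ?thesis unfolding eventually_at_top_linorder by blast
  qed
qed

lemma ISS_Lyapunov_positive_definite:
  assumes "ISS_Lyapunov v v' U s0 V ubar sbar"
  shows "continuous_on nonneg_orthant V" "V sbar = 0"
    "\<And>x. x \<in> nonneg_orthant \<Longrightarrow> x \<noteq> sbar \<Longrightarrow> 0 < V x"
  using assms unfolding ISS_Lyapunov_def by (elim conjE; blast)+

lemma ISS_Lyapunov_decreaseE:
  assumes "ISS_Lyapunov v v' U s0 V ubar sbar" "compact F" "F \<subseteq> nonneg_orthant"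
  obtains DV \<alpha> \<rho> where "\<And>x. x \<in> pos_orthant \<Longrightarrow> (V has_derivative (\<lambda>h. DV x \<bullet> h)) (at x)"
    and "class_K_inf \<alpha>" "class_K_inf \<rho>"
    and "\<And>w x. w \<in> U \<Longrightarrow> x \<in> F \<Longrightarrow> x - s0 \<in> stoich_subspace v v' \<Longrightarrow> x \<in> pos_orthant \<Longrightarrow>
           DV x \<bullet> gma_field v v' w x \<le> - \<alpha> (norm (x - sbar)) + \<rho> (norm (w - ubar))"
proof -
  obtain DV where DV: "\<forall>x\<in>pos_orthant. (V has_derivative (\<lambda>h. DV x \<bullet> h)) (at x)"
    and ISS: "\<forall>F. compact F \<and> F \<subseteq> nonneg_orthant \<longrightarrow> (\<exists>\<alpha> \<rho>. class_K_inf \<alpha> \<and> class_K_inf \<rho> \<and>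
           (\<forall>w\<in>U. \<forall>x\<in>F \<inter> {s0 + y | y. y \<in> stoich_subspace v v'} \<inter> pos_orthant.
              DV x \<bullet> gma_field v v' w x \<le> - \<alpha> (norm (x - sbar)) + \<rho> (norm (w - ubar))))"
    using assms(1) unfolding ISS_Lyapunov_def by (elim conjE exE) blast
  obtain \<alpha> \<rho> where "class_K_inf \<alpha>" "class_K_inf \<rho>"
    and decrease: "\<forall>w\<in>U. \<forall>x\<in>F \<inter> {s0 + y | y. y \<in> stoich_subspace v v'} \<inter> pos_orthant.
           DV x \<bullet> gma_field v v' w x \<le> - \<alpha> (norm (x - sbar)) + \<rho> (norm (w - ubar))"
    using ISS[rule_format, OF conjI[OF assms(2,3)]] by blast
  show thesis
  proof (rule that)
    show "(V has_derivative (\<lambda>h. DV x \<bullet> h)) (at x)" if "x \<in> pos_orthant" for x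
      using DV that by blast
    fix w x assume "w \<in> U" "x \<in> F" "x - s0 \<in> stoich_subspace v v'" "x \<in> pos_orthant"
    moreover have "x \<in> {s0 + y | y. y \<in> stoich_subspace v v'}"
      using \<open>x - s0 \<in> stoich_subspace v v'\<close> by (intro CollectI exI[of _ "x - s0"]) simp
    ultimately show "DV x \<bullet> gma_field v v' w x \<le> - \<alpha> (norm (x - sbar)) + \<rho> (norm (w - ubar))"
      using decrease by blast
  qed fact+
qed

lemma gma_solution_tendsto_of_eventually_positive:
  fixes s :: "real \<Rightarrow> real ^ 'n" and u :: "real \<Rightarrow> real ^ 'r::finite"
  assumes lyap: "ISS_Lyapunov v v' U s0 V ubar sbar" and "sbar \<in> nonneg_orthant"
    and "bounded (s ` {0..})" "\<forall>t\<ge>0. s t \<in> nonneg_orthant" and "(u \<longlongrightarrow> ubar) at_top"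
    and ev: "\<forall>\<^sub>F t in at_top. u t \<in> U \<and> s t \<in> pos_orthant \<and> s t - s0 \<in> stoich_subspace v v' \<and>
               (s has_vector_derivative gma_field v v' (u t) (s t)) (at t)"
  shows "(s \<longlongrightarrow> sbar) at_top"
proof -
  define K where "K = closure (s ` {0..})"
  have "compact K" using \<open>bounded (s ` {0..})\<close> unfolding K_def by simp
  have "K \<subseteq> nonneg_orthant"
    unfolding K_def using assms(4) by (intro closure_minimal[OF _ closed_nonneg_orthant]) auto
  obtain DV \<alpha> \<rho> where DV: "\<And>x. x \<in> pos_orthant \<Longrightarrow> (V has_derivative (\<lambda>h. DV x \<bullet> h)) (at x)"
    and \<alpha>: "class_K_inf \<alpha>" and \<rho>: "class_K_inf \<rho>"
    and decrease: "\<And>w x. w \<in> U \<Longrightarrow> x \<in> K \<Longrightarrow> x - s0 \<in> stoich_subspace v v' \<Longrightarrow> x \<in> pos_orthant \<Longrightarrow>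
           DV x \<bullet> gma_field v v' w x \<le> - \<alpha> (norm (x - sbar)) + \<rho> (norm (w - ubar))"
    using ISS_Lyapunov_decreaseE[OF lyap \<open>compact K\<close> \<open>K \<subseteq> nonneg_orthant\<close>] by blast
  have orbit: "s t \<in> K" if "0 \<le> t" for t
    unfolding K_def by (rule closure_subset[THEN subsetD]) (use that in simp)
  show ?thesis
  proof (rule lyapunov_vanishing_perturbation_tendsto[where N=nonneg_orthant and K=K and V=V and \<alpha>=\<alpha>
        and D="\<lambda>t. DV (s t) \<bullet> gma_field v v' (u t) (s t)"])
    show "strict_mono_on {0..} \<alpha>" "\<alpha> 0 = 0" using \<alpha> by (simp_all add: class_K_inf_def)
    show "((\<lambda>t. \<rho> (norm (u t - ubar))) \<longlongrightarrow> 0) at_top"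
      using \<rho> \<open>(u \<longlongrightarrow> ubar) at_top\<close> by (rule class_K_inf_tendsto_zero)
    have "\<forall>\<^sub>F t in at_top. (0::real) \<le> t" by (rule eventually_ge_at_top)
    with ev show "\<forall>\<^sub>F t in at_top. s t \<in> K \<and>
        ((\<lambda>t. V (s t)) has_real_derivative DV (s t) \<bullet> gma_field v v' (u t) (s t)) (at t) \<and>
        DV (s t) \<bullet> gma_field v v' (u t) (s t) \<le> - \<alpha> (dist (s t) sbar) + \<rho> (norm (u t - ubar))"
    proof eventually_elim
      case (elim t)
      then have "((\<lambda>t. V (s t)) has_real_derivative DV (s t) \<bullet> gma_field v v' (u t) (s t)) (at t)"
        using DV by (blast intro: has_vector_derivative_gradient_chain)
      with elim show ?case using orbit decrease by (simp add: dist_norm)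
    qed
  qed (use \<open>compact K\<close> \<open>K \<subseteq> nonneg_orthant\<close> \<open>sbar \<in> nonneg_orthant\<close>
        ISS_Lyapunov_positive_definite[OF lyap] in blast)+
qed

theorem theorem3p2:
  fixes v v' :: "'r::finite \<Rightarrow> nat ^ 'n"
    and U :: "(real ^ 'r) set"
    and u :: "real \<Rightarrow> real ^ 'r"
    and ubar :: "real ^ 'r"
    and s :: "real \<Rightarrow> real ^ 'n"
    and s0 sbar :: "real ^ 'n"
    and V :: "real ^ 'n \<Rightarrow> real"
  assumes distinct_complexes: "\<forall>j. v j \<noteq> v' j"
    and U_pos: "U \<subseteq> pos_orthant"
    and u_in_U: "\<forall>t\<ge>0. u t \<in> U"
    and u_lim: "(u \<longlongrightarrow> ubar) at_top"
    and ubar_pos: "ubar \<in> pos_orthant"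
    and s0_nonneg: "s0 \<in> nonneg_orthant"
    and init: "s 0 = s0"
    and sol: "\<forall>t\<ge>0. (s has_vector_derivative gma_field v v' (u t) (s t)) (at t within {0..})"
    and s_nonneg: "\<forall>t\<ge>0. s t \<in> nonneg_orthant"
    and s_bounded: "bounded (s ` {0..})"
    and sbar_pos: "sbar \<in> pos_orthant"
    and sbar_class: "sbar \<in> {s0 + x | x. x \<in> stoich_subspace v v'}"
    and sbar_eq: "gma_field v v' ubar sbar = 0"
    and sbar_unique: "\<forall>x\<in>{s0 + y | y. y \<in> stoich_subspace v v'} \<inter> pos_orthant.
                        gma_field v v' ubar x = 0 \<longrightarrow> x = sbar"
    and lyap: "ISS_Lyapunov v v' U s0 V ubar sbar"
  shows "(s \<longlongrightarrow> sbar) at_top \<or>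
         ((\<lambda>t. infdist (s t) (frontier nonneg_orthant)) \<longlongrightarrow> 0) at_top"
proof -
  have deriv: "\<forall>\<^sub>F t in at_top. (s has_vector_derivative gma_field v v' (u t) (s t)) (at t)"
    using sol by (rule eventually_has_vector_derivative_at)
  have state: "\<forall>\<^sub>F t in at_top. u t \<in> U \<and> s t \<in> nonneg_orthant \<and> s t - s0 \<in> stoich_subspace v v'"
    using u_in_U s_nonneg gma_solution_in_stoich_class[of 0 s v v' u] sol init
    by (intro eventually_at_top_linorderI[of 0]) auto
  then have "\<forall>\<^sub>F t in at_top. s t \<in> nonneg_orthant" "\<forall>\<^sub>F t in at_top. u t \<in> nonneg_orthant"
    using U_pos pos_orthant_subset_nonneg_orthant by (auto elim!: eventually_mono)
  with deriv consider (boundary) "\<forall>\<^sub>F t in at_top. s t \<notin> pos_orthant"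
    | (interior) "\<forall>\<^sub>F t in at_top. s t \<in> pos_orthant"
    using gma_solution_eventually_boundary_or_positive bounded_image_atLeast_imp_Bfun[OF s_bounded]
      tendsto_imp_Bfun[OF u_lim] by blast
  then show ?thesis
  proof cases
    case boundary
    with state have "\<forall>\<^sub>F t in at_top. infdist (s t) (frontier nonneg_orthant) = 0"
      by eventually_elim (use nonneg_orthant_diff_pos_orthant_subset_frontier in auto)
    then show ?thesis by (intro disjI2 tendsto_eventually)
  next
    case interior
    with state deriv have "\<forall>\<^sub>F t in at_top. u t \<in> U \<and> s t \<in> pos_orthant \<and>
        s t - s0 \<in> stoich_subspace v v' \<and> (s has_vector_derivative gma_field v v' (u t) (s t)) (at t)"
      by eventually_elim blast
    then show ?thesis
      using gma_solution_tendsto_of_eventually_positive[OF lyap _ s_bounded s_nonneg u_lim]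
        sbar_pos pos_orthant_subset_nonneg_orthant by blast
  qed
qed

end
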